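(* Let $G$ be a bipartite graph with colour classes $V$ and $W$, where $\#V=v$ and $\#W=w$, and suppose $G$ contains no cycle of length $4$ and no cycle of length $6$. (i) If $w>\lfloor v^2/4\rfloor$, then at least $\lceil w-v^2/4\rceil$ vertices of $W$ have degree $0$ or $1$. (ii) If every vertex of $G$ has degree at least $2$, then $w\le\lfloor v^2/4\rfloor$ and $v\le\lfloor w^2/4\rfloor$. *)

theory Defs
  imports Complex_Main
begin

definition bipartite_graph :: "'a set \<Rightarrow> 'a set \<Rightarrow> ('a \<Rightarrow> 'a \<Rightarrow> bool) \<Rightarrow> bool" where
  "bipartite_graph V W E \<longleftrightarrow>
     finite V \<and> finite W \<and> V \<inter> W = {} \<and>
     (\<forall>x y. E x y \<longrightarrow> E y x) \<and>
     (\<forall>x y. E x y \<longrightarrow> (x \<in> V \<and> y \<in> W) \<or> (x \<in> W \<and> y \<in> V))"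

definition has_cycle :: "('a \<Rightarrow> 'a \<Rightarrow> bool) \<Rightarrow> nat \<Rightarrow> bool" where
  "has_cycle E k \<longleftrightarrow>
     (\<exists>xs. length xs = k \<and> distinct xs \<and> (\<forall>i<k. E (xs ! i) (xs ! ((i + 1) mod k))))"

definition degree :: "('a \<Rightarrow> 'a \<Rightarrow> bool) \<Rightarrow> 'a \<Rightarrow> nat" where
  "degree E x = card {y. E x y}"

end

theory Submission
  imports Defs
begin

text \<open>Choose for every vertex of W of degree at least 2 a pair of its neighbours. Two vertices
with the same pair would span a 4-cycle, so the choice is injective; three pairs forming a
triangle would close a 6-cycle, so the chosen pairs are the edges of a triangle-free graph
on V. Mantel's theorem bounds their number by |V|^2/4, and the vertices of W outside this
set have degree 0 or 1. Part (ii) applies the bound to both colour classes.\<close>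

lemma has_cycle_4I:
  assumes "E a b" "E b c" "E c d" "E d a" "distinct [a, b, c, d]"
  shows "has_cycle E 4"
  unfolding has_cycle_def
proof (intro exI[of _ "[a, b, c, d]"] conjI allI impI)
  fix i :: nat
  assume "i < 4"
  then have "i = 0 \<or> i = 1 \<or> i = 2 \<or> i = 3" by arith
  then show "E ([a, b, c, d] ! i) ([a, b, c, d] ! ((i + 1) mod 4))" using assms by auto
qed (use assms in auto)

lemma has_cycle_6I:
  assumes "E a b" "E b c" "E c d" "E d f" "E f g" "E g a" "distinct [a, b, c, d, f, g]"
  shows "has_cycle E 6"
  unfolding has_cycle_def
proof (intro exI[of _ "[a, b, c, d, f, g]"] conjI allI impI)
  fix i :: nat
  assume "i < 6"
  then have "i = 0 \<or> i = 1 \<or> i = 2 \<or> i = 3 \<or> i = 4 \<or> i = 5" by arith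
  then show "E ([a, b, c, d, f, g] ! i) ([a, b, c, d, f, g] ! ((i + 1) mod 6))" using assms by auto
qed (use assms in auto)

text \<open>Removing both ends of an edge {x, y} deletes at most one edge per remaining vertex
besides {x, y} itself, since no vertex is adjacent to both x and y.\<close>

theorem mantel:
  assumes "finite V"
    and edges: "\<And>e. e \<in> F \<Longrightarrow> e \<subseteq> V \<and> card e = 2"
    and triangle_free: "\<And>a b c. {a, b} \<in> F \<Longrightarrow> {b, c} \<in> F \<Longrightarrow> {a, c} \<in> F \<Longrightarrow> False"
  shows "4 * card F \<le> card V ^ 2"
  using assms
proof (induction "card V" arbitrary: V F rule: less_induct)
  case less
  show ?case
  proof (cases "F = {}")
    case True
    then show ?thesis by simp
  next
    case False
    then obtain x y where xy: "{x, y} \<in> F" "x \<noteq> y" "x \<in> V" "y \<in> V"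
      using less.prems(2) by (metis card_2_iff ex_in_conv insert_subset)
    define V' where "V' = V - {x, y}"
    define F' where "F' = {e \<in> F. e \<subseteq> V'}"
    define Nx where "Nx = {z \<in> V'. {x, z} \<in> F}"
    define Ny where "Ny = {z \<in> V'. {y, z} \<in> F}"
    have card_V: "card V = card V' + 2"
      using xy less.prems(1) card_mono[of V "{x, y}"] unfolding V'_def
      by (simp add: card_Diff_subset)
    have IH: "4 * card F' \<le> card V' ^ 2"
      by (rule less.hyps) (use card_V less.prems in \<open>auto simp: V'_def F'_def\<close>)
    have "Nx \<inter> Ny = {}"
      using less.prems(3) xy(1) unfolding Nx_def Ny_def by (auto simp: insert_commute)
    then have card_N: "card Nx + card Ny \<le> card V'"
      using less.prems(1) card_Un_disjoint[of Nx Ny] card_mono[of V' "Nx \<union> Ny"]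
      unfolding Nx_def Ny_def V'_def by auto
    have "F \<subseteq> F' \<union> {{x, y}} \<union> (\<lambda>z. {x, z}) ` Nx \<union> (\<lambda>z. {y, z}) ` Ny"
    proof
      fix e
      assume "e \<in> F"
      with less.prems(2) obtain a b where "e = {a, b}" "a \<noteq> b" "a \<in> V" "b \<in> V"
        by (metis card_2_iff insert_subset)
      with \<open>e \<in> F\<close> show "e \<in> F' \<union> {{x, y}} \<union> (\<lambda>z. {x, z}) ` Nx \<union> (\<lambda>z. {y, z}) ` Ny"
        unfolding F'_def Nx_def Ny_def V'_def
        by (cases "a \<in> {x, y}"; cases "b \<in> {x, y}") (auto simp: insert_commute)
    qed
    moreover have fin: "finite Nx" "finite Ny" "finite F'"
      using less.prems(1,2) finite_subset[of F' "Pow V"]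
      unfolding Nx_def Ny_def V'_def F'_def by auto
    ultimately have "card F \<le> card (F' \<union> {{x, y}} \<union> (\<lambda>z. {x, z}) ` Nx \<union> (\<lambda>z. {y, z}) ` Ny)"
      by (intro card_mono) auto
    also have "\<dots> \<le> card F' + 1 + card Nx + card Ny"
      by (intro card_Un_le[THEN order_trans] add_mono card_image_le) (simp_all add: fin)
    finally have "card F \<le> card F' + 1 + card Nx + card Ny" .
    then have "4 * card F \<le> card V' ^ 2 + 4 * card V' + 4"
      using IH card_N by linarith
    also have "\<dots> = card V ^ 2"
      by (simp add: card_V power2_eq_square algebra_simps)
    finally show ?thesis .
  qed
qed

lemma card_degree_ge_2_le:
  assumes bg: "bipartite_graph V W E"
    and no_C4: "\<not> has_cycle E 4" and no_C6: "\<not> has_cycle E 6"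
  shows "4 * card {w \<in> W. 2 \<le> degree E w} \<le> card V ^ 2"
proof -
  define W2 where "W2 = {w \<in> W. 2 \<le> degree E w}"
  have "finite V" and disj: "V \<inter> W = {}"
    and nbrs_V: "\<And>w x. w \<in> W \<Longrightarrow> E w x \<Longrightarrow> x \<in> V"
    using bg unfolding bipartite_graph_def by blast+
  have "\<forall>w \<in> W2. \<exists>P. P \<subseteq> {x. E w x} \<and> card P = 2"
    unfolding W2_def degree_def by (metis (lifting) mem_Collect_eq obtain_subset_with_card_n)
  then obtain p where p: "\<And>w. w \<in> W2 \<Longrightarrow> p w \<subseteq> {x. E w x} \<and> card (p w) = 2"
    by metis
  have pair: "\<exists>x y. p w = {x, y} \<and> x \<noteq> y \<and> x \<in> V \<and> y \<in> V \<and> E w x \<and> E w y"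
    if w: "w \<in> W2" for w
  proof -
    obtain x y where "p w = {x, y}" "x \<noteq> y"
      using p[OF w] by (meson card_2_iff)
    moreover have "w \<in> W" using w unfolding W2_def by simp
    ultimately show ?thesis using p[OF w] nbrs_V by blast
  qed
  have "inj_on p W2"
  proof
    fix w1 w2
    assume w: "w1 \<in> W2" "w2 \<in> W2" "p w1 = p w2"
    obtain x y where xy: "p w1 = {x, y}" "x \<noteq> y" "x \<in> V" "y \<in> V" "E w1 x" "E w1 y"
      using pair[OF w(1)] by blast
    have "E w2 x" "E w2 y" using p[OF w(2)] w(3) xy(1) by auto
    moreover have "w1 \<in> W" "w2 \<in> W" using w unfolding W2_def by auto
    ultimately show "w1 = w2"
      using has_cycle_4I[of E x w1 y w2] no_C4 bg xy disj unfolding bipartite_graph_def by auto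
  qed
  moreover have "4 * card (p ` W2) \<le> card V ^ 2"
  proof (rule mantel[OF \<open>finite V\<close>])
    show "e \<subseteq> V \<and> card e = 2" if "e \<in> p ` W2" for e
      using that pair p by fastforce
  next
    fix a b c
    assume "{a, b} \<in> p ` W2" "{b, c} \<in> p ` W2" "{a, c} \<in> p ` W2"
    then obtain w1 w2 w3 where w: "w1 \<in> W2" "w2 \<in> W2" "w3 \<in> W2"
      "p w1 = {a, b}" "p w2 = {b, c}" "p w3 = {a, c}"
      by (metis imageE)
    have "w1 \<in> W" "w2 \<in> W" "w3 \<in> W" using w unfolding W2_def by auto
    moreover have "E w1 a" "E w1 b" "E w2 b" "E w2 c" "E w3 a" "E w3 c"
      using w p[OF w(1)] p[OF w(2)] p[OF w(3)] by auto
    moreover from calculation have "a \<in> V" "b \<in> V" "c \<in> V" by (auto intro: nbrs_V)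
    moreover have "a \<noteq> b" "b \<noteq> c" "a \<noteq> c"
      using w p[OF w(1)] p[OF w(2)] p[OF w(3)] by auto
    moreover from this have "w1 \<noteq> w2" "w2 \<noteq> w3" "w1 \<noteq> w3"
      using w by (auto simp: doubleton_eq_iff)
    ultimately have "has_cycle E 6"
      using has_cycle_6I[of E a w1 b w2 c w3] bg disj
      unfolding bipartite_graph_def by auto
    with no_C6 show False ..
  qed
  ultimately show ?thesis by (simp add: W2_def card_image)
qed

lemma real_le_square_div_4:
  assumes "4 * k \<le> (n::nat) ^ 2"
  shows "real k \<le> real n ^ 2 / 4"
proof -
  have "real (4 * k) \<le> real (n ^ 2)" using assms by (rule of_nat_mono)
  then show ?thesis by simp
qed

theorem proposition2p2:
  fixes V W :: "'a set" and E :: "'a \<Rightarrow> 'a \<Rightarrow> bool"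
  assumes "bipartite_graph V W E"
    and "\<not> has_cycle E 4"
    and "\<not> has_cycle E 6"
  shows "(int (card W) > \<lfloor>real (card V) ^ 2 / 4\<rfloor> \<longrightarrow>
           \<lceil>real (card W) - real (card V) ^ 2 / 4\<rceil> \<le> int (card {x \<in> W. degree E x = 0 \<or> degree E x = 1}))
       \<and> ((\<forall>x \<in> V \<union> W. degree E x \<ge> 2) \<longrightarrow>
           int (card W) \<le> \<lfloor>real (card V) ^ 2 / 4\<rfloor> \<and> int (card V) \<le> \<lfloor>real (card W) ^ 2 / 4\<rfloor>)"
proof -
  have swapped: "bipartite_graph W V E"
    using assms(1) unfolding bipartite_graph_def by blast
  have bound_W: "real (card {w \<in> W. 2 \<le> degree E w}) \<le> real (card V) ^ 2 / 4"
    by (rule real_le_square_div_4, rule card_degree_ge_2_le[OF assms])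
  have bound_V: "real (card {v \<in> V. 2 \<le> degree E v}) \<le> real (card W) ^ 2 / 4"
    by (rule real_le_square_div_4, rule card_degree_ge_2_le[OF swapped assms(2,3)])
  have "finite W" using assms(1) unfolding bipartite_graph_def by blast
  then have "card W = card {w \<in> W. 2 \<le> degree E w} + card {x \<in> W. degree E x = 0 \<or> degree E x = 1}"
    by (subst card_Un_disjoint[symmetric]) (auto intro: arg_cong[where f = card])
  with bound_W have
    "\<lceil>real (card W) - real (card V) ^ 2 / 4\<rceil> \<le> int (card {x \<in> W. degree E x = 0 \<or> degree E x = 1})"
    by (simp add: ceiling_le_iff)
  moreover have "int (card W) \<le> \<lfloor>real (card V) ^ 2 / 4\<rfloor> \<and> int (card V) \<le> \<lfloor>real (card W) ^ 2 / 4\<rfloor>"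
    if "\<forall>x \<in> V \<union> W. degree E x \<ge> 2"
  proof -
    have "{w \<in> W. 2 \<le> degree E w} = W" "{v \<in> V. 2 \<le> degree E v} = V" using that by auto
    then show ?thesis using bound_W bound_V by (simp add: le_floor_iff)
  qed
  ultimately show ?thesis by blast
qed

end
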